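(* If a topological space $X$ has a countable $\mathsf{cs}^\bullet$-network at a point $x\in X$, then $X$ is $(\omega_1,\omega)_p$-equiconvergent at $x$.
   Context: A family $\mathcal N$ of subsets of $X$ is a $\mathsf{cs}^\bullet$-network at $x$ if for every neighborhood $O_x$ of $x$ and every sequence $(x_n)_{n\in\omega}$ converging to $x$ there is $N\in\mathcal N$ with $N\subseteq O_x$ and $x_n\in N$ for some $n$. $X$ is $(\omega_1,\omega)_p$-equiconvergent at $x$ if for every indexed family $\{x_\alpha\}_{\alpha\in\omega_1}$ of sequences in $X^\omega$ converging to $x$ there is a countably infinite $\Lambda\subseteq\omega_1$ such that for every neighborhood $O_x$ of $x$ there is $n\in\omega$ with $\{\alpha\in\Lambda: x_\alpha(n)\notin O_x\}$ finite. *)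

theory Defs
  imports "HOL-Analysis.Analysis"
begin

definition cs_bullet_network_at :: "'a topology \<Rightarrow> 'a set set \<Rightarrow> 'a \<Rightarrow> bool" where
  "cs_bullet_network_at X \<N> x \<longleftrightarrow>
     (\<forall>N\<in>\<N>. N \<subseteq> topspace X) \<and>
     (\<forall>U s. openin X U \<and> x \<in> U \<and> range s \<subseteq> topspace X \<and> limitin X s x sequentially
        \<longrightarrow> (\<exists>N\<in>\<N>. N \<subseteq> U \<and> (\<exists>n. s n \<in> N)))"

text \<open>The index set omega_1 is represented by an
  arbitrary set A of cardinality aleph_1 (i.e. card_of A is order-isomorphic to the
  successor cardinal of natLeq).\<close>
definition equiconv_w1_w_at :: "'a topology \<Rightarrow> 'a \<Rightarrow> bool" where
  "equiconv_w1_w_at X x \<longleftrightarrow>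
     (\<forall>(A :: nat set set) (xs :: nat set \<Rightarrow> nat \<Rightarrow> 'a).
        (card_of A, cardSuc natLeq) \<in> ordIso \<and>
        (\<forall>\<alpha>\<in>A. range (xs \<alpha>) \<subseteq> topspace X \<and> limitin X (xs \<alpha>) x sequentially)
        \<longrightarrow> (\<exists>\<Lambda>\<subseteq>A. countable \<Lambda> \<and> infinite \<Lambda> \<and>
               (\<forall>U. openin X U \<and> x \<in> U \<longrightarrow> (\<exists>n. finite {\<alpha>\<in>\<Lambda>. xs \<alpha> n \<notin> U}))))"

end

theory Submission
  imports Defs "HOL-Library.Countable_Set_Type"
begin

text \<open>Enumerate the countable network as \<open>N\<^sub>0, N\<^sub>1, \<dots>\<close> and code each sequence \<open>x\<^sub>\<alpha>\<close> by the
  sequence of first indices at which it enters \<open>N\<^sub>0, N\<^sub>1, \<dots>\<close>. Each initial segment of this code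
  takes only countably many values, so among the uncountably many \<open>\<alpha>\<close> there is an \<open>a\<close> whose
  code-prefixes of every length are shared by uncountably many \<open>\<alpha>\<close>; choose distinct
  \<open>\<alpha>\<^sub>0, \<alpha>\<^sub>1, \<dots>\<close> with \<open>\<alpha>\<^sub>j\<close> agreeing with \<open>a\<close> on the first \<open>j + 1\<close> entries. Given a neighbourhood
  \<open>U\<close>, the network yields \<open>N\<^sub>k \<subseteq> U\<close> met by \<open>x\<^sub>a\<close>, first at index \<open>m\<close>; then \<open>x\<^sub>\<alpha>\<^sub>j(m) \<in> N\<^sub>k \<subseteq> U\<close>
  for all \<open>j \<ge> k\<close>.\<close>

lemma inj_choice_from_infinite_sets:
  fixes C :: "nat \<Rightarrow> 'a set"
  assumes "\<And>n. infinite (C n)"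
  obtains f where "inj f" "\<And>n. f n \<in> C n"
proof -
  define chosen where "chosen = rec_nat {} (\<lambda>n S. insert (SOME a. a \<in> C n - S) S)"
  define f where "f n = (SOME a. a \<in> C n - chosen n)" for n
  have chosen_eq: "chosen n = f ` {..<n}" for n
    by (induction n) (simp_all add: chosen_def f_def lessThan_Suc)
  have f_in: "f n \<in> C n - f ` {..<n}" for n
  proof -
    have "infinite (C n - chosen n)"
      using assms[of n] by (simp add: chosen_eq Diff_infinite_finite)
    then have "\<exists>a. a \<in> C n - chosen n"
      by (metis ex_in_conv finite.emptyI)
    then show ?thesis
      unfolding f_def chosen_eq[symmetric] by (rule someI_ex)
  qed
  have "inj f"
  proof (rule injI)
    fix i j assume "f i = f j"
    with f_in[of i] f_in[of j] show "i = j"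
      by (metis imageI lessThan_iff linorder_neqE_nat DiffD2)
  qed
  with f_in that show thesis by blast
qed

lemma point_with_uncountable_fibres:
  fixes P :: "'k::countable \<Rightarrow> 'a \<Rightarrow> 'c::countable"
  assumes "uncountable A"
  obtains a where "a \<in> A" "\<And>k. uncountable {b \<in> A. P k b = P k a}"
proof -
  define small where "small = (\<Union>k. \<Union>c \<in> {c. countable {b \<in> A. P k b = c}}. {b \<in> A. P k b = c})"
  have "countable small"
    unfolding small_def by (intro countable_UN countableI_type) auto
  with assms obtain a where "a \<in> A" "a \<notin> small"
    by (metis countable_subset subsetI)
  moreover have "uncountable {b \<in> A. P k b = P k a}" for k
    using \<open>a \<in> A\<close> \<open>a \<notin> small\<close> unfolding small_def by blast
  ultimately show thesis
    using that by blast
qed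

lemma uncountable_imp_inj_seq_agreeing_on_prefixes:
  fixes g :: "'a \<Rightarrow> nat \<Rightarrow> 'c::countable"
  assumes "uncountable A"
  obtains a f where "a \<in> A" "inj f" "range f \<subseteq> A" "\<And>i j. i \<le> j \<Longrightarrow> g (f j) i = g a i"
proof -
  obtain a where "a \<in> A"
    and a: "\<And>k. uncountable {b \<in> A. map (g b) [0..<Suc k] = map (g a) [0..<Suc k]}"
    using point_with_uncountable_fibres[OF assms, of "\<lambda>k b. map (g b) [0..<Suc k]"] by blast
  define agree where "agree k = {b \<in> A. map (g b) [0..<Suc k] = map (g a) [0..<Suc k]}" for k
  have "infinite (agree k)" for k
    using a countable_finite unfolding agree_def by blast
  then obtain f where "inj f" and f: "\<And>k. f k \<in> agree k"
    using inj_choice_from_infinite_sets by blast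
  have "g (f j) i = g a i" if "i \<le> j" for i j
    using f[of j] that by (auto simp: agree_def map_eq_conv le_less)
  moreover have "range f \<subseteq> A"
    using f by (auto simp: agree_def)
  ultimately show thesis
    using \<open>a \<in> A\<close> \<open>inj f\<close> that by blast
qed

lemma uncountable_if_card_of_ordIso_cardSuc_natLeq:
  assumes "(card_of A, cardSuc natLeq) \<in> ordIso"
  shows "uncountable A"
proof
  assume "countable A"
  then have "(card_of A, natLeq) \<in> ordLeq"
    by (simp add: countable_card_le_natLeq)
  also have "(natLeq, cardSuc natLeq) \<in> ordLess"
    by (rule cardSuc_greater[OF natLeq_Card_order])
  finally show False
    using assms not_ordLess_ordIso by blast
qed

definition first_hit :: "(nat \<Rightarrow> 'a) \<Rightarrow> 'a set \<Rightarrow> nat option" where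
  "first_hit s N = (if \<exists>n. s n \<in> N then Some (LEAST n. s n \<in> N) else None)"

lemma first_hit_SomeD: "first_hit s N = Some m \<Longrightarrow> s m \<in> N"
  unfolding first_hit_def by (auto split: if_splits intro: LeastI_ex)

lemma first_hit_eq_Some: "s n \<in> N \<Longrightarrow> \<exists>m. first_hit s N = Some m"
  unfolding first_hit_def by auto

lemma cs_bullet_network_atD:
  assumes "cs_bullet_network_at X \<N> x" "openin X U" "x \<in> U"
    and "range s \<subseteq> topspace X" "limitin X s x sequentially"
  obtains N n where "N \<in> \<N>" "N \<subseteq> U" "s n \<in> N"
  using assms unfolding cs_bullet_network_at_def by blast

lemma eventually_in_if_first_hits_agree:
  assumes "cs_bullet_network_at X \<N> x" "countable \<N>" "openin X U" "x \<in> U"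
    and "range s \<subseteq> topspace X" "limitin X s x sequentially"
    and agree: "\<And>i j. i \<le> j \<Longrightarrow> first_hit (t j) (from_nat_into \<N> i) = first_hit s (from_nat_into \<N> i)"
  obtains m where "\<forall>\<^sub>F j in sequentially. t j m \<in> U"
proof -
  obtain N n where "N \<in> \<N>" "N \<subseteq> U" "s n \<in> N"
    using cs_bullet_network_atD[OF assms(1,3-6)] by blast
  then obtain k m where k: "from_nat_into \<N> k = N" and m: "first_hit s N = Some m"
    by (metis assms(2) from_nat_into_surj first_hit_eq_Some)
  have "t j m \<in> U" if "k \<le> j" for j
  proof -
    have "first_hit (t j) N = Some m"
      using agree[OF that] k m by simp
    then show ?thesis
      using first_hit_SomeD \<open>N \<subseteq> U\<close> by blast
  qed
  then show thesis
    using that eventually_sequentially by blast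
qed

theorem theorem4p2:
  fixes X :: "'a topology" and x :: 'a and \<N> :: "'a set set"
  assumes "x \<in> topspace X"
    and "countable \<N>"
    and "cs_bullet_network_at X \<N> x"
  shows "equiconv_w1_w_at X x"
  unfolding equiconv_w1_w_at_def
proof (intro allI impI)
  fix A :: "nat set set" and xs :: "nat set \<Rightarrow> nat \<Rightarrow> 'a"
  assume A: "(card_of A, cardSuc natLeq) \<in> ordIso \<and>
    (\<forall>\<alpha>\<in>A. range (xs \<alpha>) \<subseteq> topspace X \<and> limitin X (xs \<alpha>) x sequentially)"
  obtain a f where "a \<in> A" "inj f" "range f \<subseteq> A"
    and agree: "\<And>i j. i \<le> j \<Longrightarrow> first_hit (xs (f j)) (from_nat_into \<N> i) = first_hit (xs a) (from_nat_into \<N> i)"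
    using uncountable_imp_inj_seq_agreeing_on_prefixes[where g = "\<lambda>\<alpha> i. first_hit (xs \<alpha>) (from_nat_into \<N> i)"]
      uncountable_if_card_of_ordIso_cardSuc_natLeq A by blast
  have "\<exists>m. finite {\<alpha> \<in> range f. xs \<alpha> m \<notin> U}" if U: "openin X U" "x \<in> U" for U
  proof -
    obtain m where "\<forall>\<^sub>F j in sequentially. xs (f j) m \<in> U"
      using eventually_in_if_first_hits_agree[OF assms(3,2) U, of "xs a" "\<lambda>j. xs (f j)"] A \<open>a \<in> A\<close> agree
      by blast
    then have "finite {j. xs (f j) m \<notin> U}"
      by (simp add: eventually_cofinite cofinite_eq_sequentially[symmetric])
    then have "finite (f ` {j. xs (f j) m \<notin> U})"
      by (rule finite_imageI)
    also have "f ` {j. xs (f j) m \<notin> U} = {\<alpha> \<in> range f. xs \<alpha> m \<notin> U}"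
      by blast
    finally show ?thesis ..
  qed
  with \<open>range f \<subseteq> A\<close> \<open>inj f\<close> show "\<exists>\<Lambda>\<subseteq>A. countable \<Lambda> \<and> infinite \<Lambda> \<and>
    (\<forall>U. openin X U \<and> x \<in> U \<longrightarrow> (\<exists>n. finite {\<alpha>\<in>\<Lambda>. xs \<alpha> n \<notin> U}))"
    by (intro exI[of _ "range f"]) (auto simp: range_inj_infinite)
qed

end
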